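(* Let $q\ge2$, $d\ge2$, $P\ge1$ and $n\ge1$ be integers, and let $p$ be the smallest prime with $p\ge\max\{P,q\}$. Set $p_0=(d-1)(q-1)+1$ and $p_i=p$ for $i\in[1,d-2]$. Let $a_0\in[0,p_0-1]$ and $a_i\in[0,p_i-1]$ for $i\in[1,d-2]$, and define $$\mathcal{C}_{q,d,P}=\{\boldsymbol{x}\in\Sigma_q^n:\ \mathrm{VT}^{(i)}(\boldsymbol{x})\equiv a_i\pmod{p_i}\ \text{for all } i\in[0,d-2]\}.$$ Then for any two distinct $\boldsymbol{x},\boldsymbol{y}\in\mathcal{C}_{q,d,P}$, if the difference between the largest and the smallest index at which $\boldsymbol{x}$ and $\boldsymbol{y}$ differ is less than $P$, then $d_H(\boldsymbol{x},\boldsymbol{y})\ge d$. Moreover, there exists a choice of $a_0,\dots,a_{d-2}$ such that $r(\mathcal{C}_{q,d,P})\le(d-2)\log_q(2\max\{P,q\})+\log_q((d-1)(q-1)+1)$.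
   Context: $\Sigma_q=\{0,\dots,q-1\}$; $[i,j]=\{i,\dots,j\}$. For $\boldsymbol{x}\in\Sigma_q^n$, $x[i]$ is its $i$-th entry and $\mathrm{VT}^{(k)}(\boldsymbol{x})=\sum_{i=1}^n i^kx[i]$ (integer). $d_H$ is Hamming distance. Redundancy: $r(\mathcal{C})=n-\log_q|\mathcal{C}|$. *)

theory Defs
  imports "HOL-Computational_Algebra.Primes" Complex_Main
begin

text \<open>Words of length n over the alphabet {0,...,q-1}, as lists; the i-th entry
  (1-based, i in [1,n]) of x is x ! (i - 1).\<close>
definition words :: "nat \<Rightarrow> nat \<Rightarrow> nat list set" where
  "words q n = {x. length x = n \<and> (\<forall>i<n. x ! i < q)}"

definition VT :: "nat \<Rightarrow> nat list \<Rightarrow> int" where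
  "VT k x = (\<Sum>i = 1..length x. int i ^ k * int (x ! (i - 1)))"

definition diff_pos :: "nat list \<Rightarrow> nat list \<Rightarrow> nat set" where
  "diff_pos x y = {i \<in> {1..length x}. x ! (i - 1) \<noteq> y ! (i - 1)}"

definition hamming :: "nat list \<Rightarrow> nat list \<Rightarrow> nat" where
  "hamming x y = card (diff_pos x y)"

definition pmin :: "nat \<Rightarrow> nat \<Rightarrow> nat" where
  "pmin P q = (LEAST p. prime p \<and> max P q \<le> p)"

definition modulus :: "nat \<Rightarrow> nat \<Rightarrow> nat \<Rightarrow> nat \<Rightarrow> nat" where
  "modulus q d P i = (if i = 0 then (d - 1) * (q - 1) + 1 else pmin P q)"

definition code :: "nat \<Rightarrow> nat \<Rightarrow> nat \<Rightarrow> nat \<Rightarrow> (nat \<Rightarrow> nat) \<Rightarrow> nat list set" where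
  "code q d P n a = {x \<in> words q n. \<forall>i \<in> {0..d - 2}.
      VT i x mod int (modulus q d P i) = int (a i) mod int (modulus q d P i)}"

definition redundancy :: "nat \<Rightarrow> nat \<Rightarrow> nat list set \<Rightarrow> real" where
  "redundancy q n C = real n - log (real q) (real (card C))"

end

theory Submission
  imports Defs "HOL-Library.Discrete_Functions" "HOL-Library.FuncSet"
    "HOL-Computational_Algebra.Polynomial"
begin

(* Let x, y be codewords differing exactly on the positions D, with |D| < d and all of D inside a
   window of length P, and put e_i = x[i] - y[i]. The zeroth moment sum e_i is divisible by
   p_0 = (d-1)(q-1)+1 but has absolute value at most (d-1)(q-1), so it vanishes; the moments
   sum e_i i^k for 1 <= k <= d-2 are divisible by the prime p. Pairing these moments with the
   coefficients of the polynomial prod over r in D - {s} of (X - r), which has degree at most d-2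
   and vanishes on D - {s}, shows that p divides e_s * prod (s - r). Every factor s - r is nonzero
   and shorter than P <= p, so p divides e_s, contradicting 0 < |e_s| < q <= p.
   The redundancy bound is pigeonhole over the p_0 p^(d-2) choices of residues a, together with
   p <= 2 max{P,q}, which is Bertrand's postulate. Erdos's proof of the latter bounds the prime
   factorisation of binom(2n, n) from above when no prime lies in (n, 2n] and compares the result
   with the lower bound 4^n / (2n). *)

section \<open>Bertrand's postulate\<close>

lemma prime_if_no_divisor_below:
  fixes p m :: nat
  assumes "1 < p" "p < m * m" "\<forall>d\<in>set [2..<m]. d * d \<le> p \<longrightarrow> \<not> d dvd p"
  shows "prime p"
proof (rule ccontr)
  assume "\<not> prime p"
  then obtain d where d: "d dvd p" "d \<noteq> 1" "d \<noteq> p"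
    using assms(1) by (auto simp: prime_nat_iff)
  then obtain c where c: "p = d * c" by blast
  define e where "e = min d c"
  have "e dvd p" "e * e \<le> p"
    using c by (auto simp: e_def min_def intro: mult_le_mono)
  moreover have "2 \<le> e"
    using c d assms(1) by (cases "d = 0 \<or> c = 0 \<or> c = 1") (auto simp: e_def min_def)
  moreover have "e < m"
  proof (rule ccontr)
    assume "\<not> e < m"
    then have "m * m \<le> e * e"
      by (simp add: mult_le_mono)
    then show False
      using \<open>e * e \<le> p\<close> assms(2) by linarith
  qed
  ultimately show False
    using assms(3) by auto
qed

lemma prime_in_doubling_chain:
  fixes ps :: "nat list" and n :: nat
  assumes "ps \<noteq> []" "\<forall>p\<in>set ps. prime p" "successively (\<lambda>a b. b \<le> 2 * a) ps"
    and "hd ps \<le> 2 * n" "n < last ps"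
  shows "\<exists>p. prime p \<and> n < p \<and> p \<le> 2 * n"
  using assms
proof (induction ps)
  case (Cons p ps)
  show ?case
  proof (cases "n < p")
    case True
    then show ?thesis using Cons.prems by auto
  next
    case False
    then have "ps \<noteq> []" using Cons.prems(5) by auto
    then show ?thesis
      using Cons False by (intro Cons.IH) (auto simp: successively_Cons)
  qed
qed simp

lemma bertrand_small:
  fixes n :: nat
  assumes "1 \<le> n" "n < 5003"
  shows "\<exists>p. prime p \<and> n < p \<and> p \<le> 2 * n"
proof (rule prime_in_doubling_chain)
  let ?ps = "[2, 3, 5, 7, 13, 23, 43, 83, 163, 317, 631, 1259, 2503, 5003 :: nat]"
  show "\<forall>p\<in>set ?ps. prime p"
    unfolding list.set ball_simps
    by (intro conjI TrueI; rule prime_if_no_divisor_below[where m = 71]; simp add: upt_rec)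
qed (use assms in simp_all)

lemma multiplicity_fact:
  fixes p :: nat
  assumes "prime p" "m \<le> M"
  shows "multiplicity p (fact m :: nat) = (\<Sum>k=1..M. m div p ^ k)"
  using assms(2)
proof (induction m)
  case (Suc m)
  have "p ^ multiplicity p (Suc m) \<le> Suc m"
    by (intro dvd_imp_le multiplicity_dvd) simp
  moreover have "multiplicity p (Suc m) < p ^ multiplicity p (Suc m)"
    using prime_gt_1_nat[OF assms(1)] by (simp add: power_gt_expt)
  ultimately have "multiplicity p (Suc m) \<le> M"
    using Suc.prems by linarith
  moreover have "p ^ k dvd Suc m \<longleftrightarrow> k \<le> multiplicity p (Suc m)" for k
    using prime_gt_1_nat[OF assms(1)] by (intro power_dvd_iff_le_multiplicity) simp_all
  ultimately have "{k \<in> {1..M}. p ^ k dvd Suc m} = {1..multiplicity p (Suc m)}"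
    by (simp add: set_eq_iff) (meson le_trans)
  then have "multiplicity p (Suc m) = (\<Sum>k=1..M. if p ^ k dvd Suc m then 1 else 0)"
    by (simp add: sum.If_cases Int_def conj_commute)
  moreover have "Suc m div p ^ k = (if p ^ k dvd Suc m then 1 else 0) + m div p ^ k" for k
    using assms(1) by (simp add: div_Suc dvd_eq_mod_eq_0 prime_gt_0_nat)
  moreover have "multiplicity p (fact (Suc m) :: nat)
      = multiplicity p (Suc m) + multiplicity p (fact m :: nat)"
    using assms(1) prime_elem_multiplicity_mult_distrib[of p "Suc m" "fact m :: nat"]
    by (simp only: fact_Suc of_nat_id) simp
  ultimately show ?case
    using Suc by (simp add: sum.distrib)
qed simp

lemma double_div_eq:
  fixes n c :: nat
  assumes "0 < c"
  shows "2 * n div c = 2 * (n div c) + (if c \<le> 2 * (n mod c) then 1 else 0)"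
proof -
  have "2 * n = 2 * (n mod c) + c * (2 * (n div c))"
    by (metis add.commute distrib_left div_mult_mod_eq mult.commute mult.left_commute)
  then have "2 * n div c = 2 * (n mod c) div c + 2 * (n div c)"
    using assms by simp
  moreover have "2 * (n mod c) div c = (if c \<le> 2 * (n mod c) then 1 else 0)"
    using assms mod_less_divisor[OF assms, of n] by (auto intro: div_nat_eqI)
  ultimately show ?thesis
    by simp
qed

(* Kummer: the exponent of p counts the carries in the base-p addition n + n. *)
lemma multiplicity_central_binomial:
  fixes p n :: nat
  assumes "prime p"
  shows "multiplicity p (2 * n choose n) = card {k \<in> {1..2 * n}. p ^ k \<le> 2 * (n mod p ^ k)}"
proof -
  have "fact (2 * n) = fact n * fact n * (2 * n choose n :: nat)"
    using binomial_fact_lemma[of n "2 * n"] by simp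
  then have "multiplicity p (fact (2 * n) :: nat)
      = 2 * multiplicity p (fact n :: nat) + multiplicity p (2 * n choose n)"
    using assms by (simp add: prime_elem_multiplicity_mult_distrib)
  moreover have "multiplicity p (fact (2 * n) :: nat) = (\<Sum>k=1..2 * n. 2 * n div p ^ k)"
    using assms by (intro multiplicity_fact) simp_all
  moreover have "multiplicity p (fact n :: nat) = (\<Sum>k=1..2 * n. n div p ^ k)"
    using assms by (intro multiplicity_fact) simp_all
  moreover have "(\<Sum>k=1..2 * n. 2 * n div p ^ k)
      = 2 * (\<Sum>k=1..2 * n. n div p ^ k) + card {k \<in> {1..2 * n}. p ^ k \<le> 2 * (n mod p ^ k)}"
    using assms by (simp add: double_div_eq prime_gt_0_nat sum.distrib sum_distrib_left
        sum.If_cases Int_def)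
  ultimately show ?thesis
    by linarith
qed

lemma prime_power_multiplicity_central_binomial_le:
  fixes p n :: nat
  assumes "prime p" "1 \<le> n"
  shows "p ^ multiplicity p (2 * n choose n) \<le> 2 * n"
proof (rule ccontr)
  define j where "j = multiplicity p (2 * n choose n)"
  assume "\<not> p ^ multiplicity p (2 * n choose n) \<le> 2 * n"
  then have "2 * n < p ^ j"
    by (simp add: j_def)
  have "{k \<in> {1..2 * n}. p ^ k \<le> 2 * (n mod p ^ k)} \<subseteq> {1..<j}"
  proof safe
    fix k assume "k \<in> {1..2 * n}" "p ^ k \<le> 2 * (n mod p ^ k)"
    then have "p ^ k < p ^ j"
      using \<open>2 * n < p ^ j\<close> mod_less_eq_dividend[of n "p ^ k"] by linarith
    then show "k \<in> {1..<j}"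
      using \<open>k \<in> {1..2 * n}\<close> prime_gt_1_nat[OF assms(1)]
      by (simp add: power_strict_increasing_iff)
  qed
  then have "j \<le> j - 1"
    using card_mono[of "{1..<j}"] assms(1) by (simp add: j_def multiplicity_central_binomial)
  then show False
    using \<open>2 * n < p ^ j\<close> assms(2) by (cases j) simp_all
qed

lemma multiplicity_central_binomial_large_prime:
  fixes p n :: nat
  assumes "prime p" "2 * n < p ^ 2"
  shows "multiplicity p (2 * n choose n) = (if p \<le> 2 * (n mod p) then 1 else 0)"
proof -
  define S where "S = {k \<in> {1..2 * n}. p ^ k \<le> 2 * (n mod p ^ k)}"
  have "k = 1" if "k \<in> S" for k
  proof (rule ccontr)
    assume "k \<noteq> 1"
    then have "p ^ 2 \<le> p ^ k"
      using that prime_gt_1_nat[OF assms(1)] by (intro power_increasing) (simp_all add: S_def)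
    then show False
      using that assms(2) mod_less_eq_dividend[of n "p ^ k"] by (simp add: S_def)
  qed
  moreover have "1 \<in> S \<longleftrightarrow> p \<le> 2 * (n mod p)"
    using prime_gt_1_nat[OF assms(1)] by (cases "n = 0") (simp_all add: S_def)
  ultimately have "S = (if p \<le> 2 * (n mod p) then {1} else {})"
    by auto
  then show ?thesis
    using assms(1) by (simp add: S_def multiplicity_central_binomial)
qed

lemma double_mod_ge_cases:
  fixes p n :: nat
  assumes "p \<le> 2 * (n mod p)"
  shows "n < p \<and> p \<le> 2 * n \<or> 3 * p \<le> 2 * n"
proof (cases "n < p")
  case False
  then have "n mod p \<le> n - p"
    by (simp add: le_mod_geq)
  then show ?thesis
    using assms False by linarith
qed (use assms in simp)

lemma prod_prime_set_dvd:
  fixes A :: "nat set"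
  assumes "\<And>p. p \<in> A \<Longrightarrow> prime p \<and> p dvd x" "0 < x"
  shows "\<Prod>A dvd x"
proof -
  have "A \<subseteq> prime_factors x"
    using assms by (auto simp: in_prime_factors_iff)
  have "\<Prod>A dvd (\<Prod>p\<in>prime_factors x. p ^ multiplicity p x)"
  proof (rule prod_dvd_prod_subset2)
    fix p assume "p \<in> A"
    then have "0 < multiplicity p x"
      using \<open>A \<subseteq> prime_factors x\<close> prime_factors_multiplicity by blast
    then show "p dvd p ^ multiplicity p x"
      by (simp add: dvd_power)
  qed (use \<open>A \<subseteq> prime_factors x\<close> in auto)
  then show ?thesis
    using prime_factorization_nat[OF assms(2)] by simp
qed

lemma prod_primes_between_dvd_binomial:
  "\<Prod>{p. prime p \<and> k + 1 < p \<and> p \<le> 2 * k + 1} dvd (2 * k + 1 choose k)"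
proof (rule prod_prime_set_dvd)
  fix p assume p: "p \<in> {p. prime p \<and> k + 1 < p \<and> p \<le> 2 * k + 1}"
  have "fact k * fact (k + 1) * (2 * k + 1 choose k) = (fact (2 * k + 1) :: nat)"
    using binomial_fact_lemma[of k "2 * k + 1"] by (simp add: Suc_diff_le)
  moreover have "p dvd fact (2 * k + 1)" "\<not> p dvd fact k" "\<not> p dvd fact (k + 1)"
    using p prime_dvd_fact_iff[of p "2 * k + 1"] prime_dvd_fact_iff[of p k]
      prime_dvd_fact_iff[of p "k + 1"] by simp_all
  ultimately show "prime p \<and> p dvd (2 * k + 1 choose k)"
    using p by (metis (mono_tags) mem_Collect_eq prime_dvd_mult_iff)
qed simp

lemma prod_primes_le_four_pow: "\<Prod>{p :: nat. prime p \<and> p \<le> m} \<le> 4 ^ m"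
proof (induction m rule: less_induct)
  case (less m)
  show ?case
  proof (cases "m \<le> 2")
    case True
    then have "{p :: nat. prime p \<and> p \<le> m} = (if 2 \<le> m then {2} else {})"
      by (auto dest: prime_ge_2_nat)
    then show ?thesis
      using power_increasing[of 1 m "4 :: nat"] by auto
  next
    case m_gt_2: False
    show ?thesis
    proof (cases "even m")
      case True
      then have "\<not> prime m"
        using m_gt_2 prime_odd_nat[of m] by auto
      then have "{p. prime p \<and> p \<le> m} = {p. prime p \<and> p \<le> m - 1}"
        using m_gt_2 by (auto simp: le_diff_conv2 Suc_le_eq order.order_iff_strict)
      then have "\<Prod>{p. prime p \<and> p \<le> m} \<le> 4 ^ (m - 1)"
        using less.IH[of "m - 1"] m_gt_2 by simp
      also have "\<dots> \<le> 4 ^ m"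
        by (intro power_increasing) simp_all
      finally show ?thesis .
    next
      case False
      then obtain k where m: "m = 2 * k + 1"
        by (rule oddE)
      have split: "{p. prime p \<and> p \<le> m}
          = {p. prime p \<and> p \<le> k + 1} \<union> {p. prime p \<and> k + 1 < p \<and> p \<le> 2 * k + 1}"
        using m by auto
      have "\<Prod>{p. prime p \<and> p \<le> m}
          = \<Prod>{p. prime p \<and> p \<le> k + 1} * \<Prod>{p. prime p \<and> k + 1 < p \<and> p \<le> 2 * k + 1}"
        unfolding split by (rule prod.union_disjoint) auto
      also have "\<Prod>{p. prime p \<and> p \<le> k + 1} \<le> 4 ^ (k + 1)"
        using less.IH[of "k + 1"] m m_gt_2 by simp
      also have "\<Prod>{p. prime p \<and> k + 1 < p \<and> p \<le> 2 * k + 1} \<le> (2 * k + 1 choose k)"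
        by (intro dvd_imp_le prod_primes_between_dvd_binomial) simp
      also have "(2 * k + 1 choose k) \<le> (\<Sum>i\<le>k. 2 * k + 1 choose i)"
        by (intro member_le_sum) simp_all
      also have "\<dots> = 4 ^ k"
        unfolding binomial_r_part_sum by (simp add: power_mult)
      also have "4 ^ (k + 1) * 4 ^ k = (4 :: nat) ^ m"
        using m by (simp add: power_add[symmetric])
      finally show ?thesis
        by simp
    qed
  qed
qed

lemma central_binomial_le_if_no_prime_between:
  fixes n :: nat
  assumes "1 \<le> n" "\<nexists>p. prime p \<and> n < p \<and> p \<le> 2 * n"
  shows "(2 * n choose n) \<le> (2 * n) ^ floor_sqrt (2 * n) * 4 ^ (2 * n div 3)"
proof -
  define C where "C = 2 * n choose n"
  define s where "s = floor_sqrt (2 * n)"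
  define F where "F = prime_factors C"
  have large_factor: "multiplicity p C = 1 \<and> 3 * p \<le> 2 * n" if "p \<in> F - {..s}" for p
  proof -
    have "prime p" "0 < multiplicity p C"
      using that by (auto simp: F_def prime_factors_multiplicity)
    have "2 * n < (s + 1) ^ 2"
      using Suc_floor_sqrt_power2_gt[of "2 * n"] by (simp add: s_def)
    also have "\<dots> \<le> p ^ 2"
      using that by (intro power_mono) auto
    finally have "multiplicity p C = (if p \<le> 2 * (n mod p) then 1 else 0)"
      using \<open>prime p\<close> by (simp add: C_def multiplicity_central_binomial_large_prime)
    then have "multiplicity p C = 1" "p \<le> 2 * (n mod p)"
      using \<open>0 < multiplicity p C\<close> by (simp_all split: if_splits)
    then show ?thesis
      using double_mod_ge_cases[of p n] assms(2) \<open>prime p\<close> by auto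
  qed
  have "C = (\<Prod>p\<in>F. p ^ multiplicity p C)"
    using prime_factorization_nat[of C] by (simp add: C_def F_def)
  also have "\<dots> = (\<Prod>p\<in>F \<inter> {..s}. p ^ multiplicity p C)
      * (\<Prod>p\<in>F - {..s}. p ^ multiplicity p C)"
    by (simp add: F_def prod.Int_Diff)
  also have "(\<Prod>p\<in>F \<inter> {..s}. p ^ multiplicity p C) \<le> (\<Prod>p\<in>F \<inter> {..s}. 2 * n)"
    using assms(1) prime_power_multiplicity_central_binomial_le
    by (intro prod_mono) (auto simp: C_def F_def in_prime_factors_iff)
  also have "\<dots> \<le> (2 * n) ^ s"
  proof -
    have "F \<inter> {..s} \<subseteq> {1..s}"
      by (auto simp: F_def in_prime_factors_iff prime_gt_0_nat Suc_le_eq)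
    then have "card (F \<inter> {..s}) \<le> s"
      using card_mono[of "{1..s}"] by simp
    then show ?thesis
      using assms(1) power_increasing[of "card (F \<inter> {..s})" s "2 * n"] by simp
  qed
  also have "(\<Prod>p\<in>F - {..s}. p ^ multiplicity p C) = \<Prod>(F - {..s})"
    using large_factor by simp
  also have "\<dots> \<le> \<Prod>{p. prime p \<and> p \<le> 2 * n div 3}"
  proof (intro dvd_imp_le prod_dvd_prod_subset subsetI)
    fix p assume "p \<in> F - {..s}"
    then show "p \<in> {p. prime p \<and> p \<le> 2 * n div 3}"
      using large_factor[of p] by (auto simp: F_def in_prime_factors_iff)
  qed (auto intro: prod_pos simp: prime_gt_0_nat)
  also have "\<dots> \<le> 4 ^ (2 * n div 3)"
    by (rule prod_primes_le_four_pow)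
  finally show ?thesis
    by (simp add: C_def s_def mult_le_mono)
qed

lemma twelfth_power_le_two_power:
  fixes t :: nat
  assumes "80 \<le> t"
  shows "t ^ 12 \<le> 2 ^ t"
  using assms
proof (induction t rule: dec_induct)
  case (step t)
  have "80 ^ 12 * (t + 1) ^ 12 = (80 * (t + 1)) ^ 12"
    by (simp only: power_mult_distrib)
  also have "\<dots> \<le> (81 * t) ^ 12"
    using step.hyps(1) by (intro power_mono) simp_all
  also have "\<dots> \<le> 80 ^ 12 * (2 * t ^ 12)"
    by (simp add: power_mult_distrib)
  finally have "(t + 1) ^ 12 \<le> 2 * t ^ 12"
    by (simp only: mult_le_cancel1) simp
  also have "\<dots> \<le> 2 * 2 ^ t"
    using step.IH by simp
  finally show ?case
    by simp
qed simp

lemma erdos_bound_less_four_pow: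
  fixes n :: nat
  assumes "3200 \<le> n"
  shows "(2 * n) ^ (floor_sqrt (2 * n) + 1) * 4 ^ (2 * n div 3) < 4 ^ n"
proof -
  define s where "s = floor_sqrt (2 * n)"
  define t where "t = s + 1"
  define b where "b = n - 2 * n div 3"
  have "s ^ 2 \<le> 2 * n" "2 * n < t ^ 2"
    using Suc_floor_sqrt_power2_gt[of "2 * n"] by (simp_all add: s_def t_def)
  have "80 \<le> s"
    using assms by (simp add: s_def le_floor_sqrtI)
  moreover have "t ^ 2 = s * s + 2 * s + 1"
    by (simp add: t_def power2_eq_square algebra_simps)
  moreover have "80 * s \<le> s * s"
    using \<open>80 \<le> s\<close> by simp
  ultimately have "t ^ 2 < 2 * s ^ 2"
    unfolding power2_eq_square by linarith
  have "n \<le> 3 * b"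
    unfolding b_def by presburger
  have "(4 :: nat) ^ b = 2 ^ (2 * b)"
    by (simp add: power_mult)
  have "((2 * n) ^ t) ^ 6 \<le> ((t ^ 2) ^ t) ^ 6"
    using \<open>2 * n < t ^ 2\<close> by (intro power_mono) simp_all
  also have "\<dots> = (t ^ 12) ^ t"
    by (simp add: power_mult[symmetric] ac_simps)
  also have "\<dots> \<le> (2 ^ t) ^ t"
    using \<open>80 \<le> s\<close> twelfth_power_le_two_power[of t] by (intro power_mono) (simp_all add: t_def)
  also have "\<dots> = 2 ^ (t ^ 2)"
    by (simp add: power_mult[symmetric] power2_eq_square)
  also have "\<dots> < 2 ^ (2 * s ^ 2)"
    using \<open>t ^ 2 < 2 * s ^ 2\<close> by simp
  also have "\<dots> \<le> 2 ^ (12 * b)"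
    using \<open>s ^ 2 \<le> 2 * n\<close> \<open>n \<le> 3 * b\<close> by (intro power_increasing) simp_all
  also have "\<dots> = (4 ^ b) ^ 6"
    using \<open>4 ^ b = 2 ^ (2 * b)\<close> by (simp add: power_mult[symmetric] mult.commute)
  finally have "(2 * n) ^ t < 4 ^ b"
    by (rule power_less_imp_less_base) simp
  then have "(2 * n) ^ t * 4 ^ (2 * n div 3) < 4 ^ b * 4 ^ (2 * n div 3)"
    by simp
  also have "\<dots> = 4 ^ n"
    by (simp add: b_def power_add[symmetric])
  finally show ?thesis
    by (simp add: t_def s_def)
qed

lemma four_pow_le_central_binomial:
  fixes n :: nat
  assumes "1 \<le> n"
  shows "4 ^ n \<le> (2 * n choose n) * (2 * n)"
proof -
  have "4 ^ n / (2 * real n) \<le> real (2 * n choose n)"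
    using assms by (intro central_binomial_lower_bound) simp
  then have "real (4 ^ n) \<le> real ((2 * n choose n) * (2 * n))"
    using assms by (simp add: field_simps)
  then show ?thesis
    by (simp only: of_nat_le_iff)
qed

theorem bertrand:
  fixes n :: nat
  assumes "1 \<le> n"
  shows "\<exists>p. prime p \<and> n < p \<and> p \<le> 2 * n"
proof (cases "n < 5003")
  case True
  then show ?thesis
    using assms bertrand_small by blast
next
  case False
  show ?thesis
  proof (rule ccontr)
    assume "\<nexists>p. prime p \<and> n < p \<and> p \<le> 2 * n"
    then have "(2 * n choose n) * (2 * n)
        \<le> (2 * n) ^ floor_sqrt (2 * n) * 4 ^ (2 * n div 3) * (2 * n)"
      using assms central_binomial_le_if_no_prime_between by (intro mult_le_mono1)
    also have "\<dots> = (2 * n) ^ (floor_sqrt (2 * n) + 1) * 4 ^ (2 * n div 3)"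
      by (simp add: ac_simps)
    also have "\<dots> < 4 ^ n"
      using False by (intro erdos_bound_less_four_pow) simp
    finally show False
      using four_pow_le_central_binomial[OF assms] by simp
  qed
qed

section \<open>Moment conditions\<close>

lemma dvd_sum_poly_if_dvd_moments:
  fixes e x :: "'b \<Rightarrow> 'a :: comm_semiring_1"
  assumes "\<And>k. k \<le> degree f \<Longrightarrow> c dvd (\<Sum>i\<in>D. e i * x i ^ k)"
  shows "c dvd (\<Sum>i\<in>D. e i * poly f (x i))"
proof -
  have "(\<Sum>i\<in>D. e i * poly f (x i)) = (\<Sum>k\<le>degree f. coeff f k * (\<Sum>i\<in>D. e i * x i ^ k))"
    by (simp add: poly_altdef sum_distrib_left mult_ac sum.swap[of _ D])
  moreover have "c dvd (\<Sum>k\<le>degree f. coeff f k * (\<Sum>i\<in>D. e i * x i ^ k))"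
    using assms by (intro dvd_sum ballI) (simp add: dvd_mult)
  ultimately show ?thesis
    by simp
qed

lemma prime_dvd_weight_if_dvd_moments:
  fixes e x :: "'b \<Rightarrow> 'a :: {idom, normalization_semidom}"
  assumes "prime p" "finite D" "s \<in> D" "card D \<le> K + 1"
    and moments: "\<And>k. k \<le> K \<Longrightarrow> p dvd (\<Sum>i\<in>D. e i * x i ^ k)"
    and separated: "\<And>r. r \<in> D \<Longrightarrow> r \<noteq> s \<Longrightarrow> \<not> p dvd x s - x r"
  shows "p dvd e s"
proof -
  define f where "f = (\<Prod>r\<in>D - {s}. [:- x r, 1:])"
  have "degree f = card (D - {s})"
    unfolding f_def by (subst degree_prod_sum_eq) simp_all
  then have "degree f \<le> K"
    using assms(2-4) by simp
  then have "p dvd (\<Sum>i\<in>D. e i * poly f (x i))"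
    using moments by (intro dvd_sum_poly_if_dvd_moments) simp
  also have "(\<Sum>i\<in>D. e i * poly f (x i)) = e s * poly f (x s)"
  proof -
    have "poly f (x i) = 0" if "i \<in> D - {s}" for i
      using that assms(2) by (auto simp: f_def poly_prod prod_zero_iff)
    then show ?thesis
      using assms(2,3) by (simp add: sum.remove)
  qed
  finally have "p dvd e s * (\<Prod>r\<in>D - {s}. x s - x r)"
    by (simp add: f_def poly_prod)
  moreover have "\<not> p dvd (\<Prod>r\<in>D - {s}. x s - x r)"
    using separated assms(1,2) by (simp add: prime_dvd_prod_iff)
  ultimately show ?thesis
    using assms(1) by (simp add: prime_dvd_mult_iff)
qed

section \<open>Distance and redundancy of the code\<close>

lemma prime_pmin: "prime (pmin P q)"
  and pmin_ge: "max P q \<le> pmin P q"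
proof -
  have "\<exists>p. prime p \<and> max P q \<le> p"
    using bigger_prime[of "max P q"] by (auto intro: less_imp_le)
  then have "prime (pmin P q) \<and> max P q \<le> pmin P q"
    unfolding pmin_def by (rule LeastI_ex)
  then show "prime (pmin P q)" "max P q \<le> pmin P q"
    by simp_all
qed

lemma pmin_le_double:
  assumes "1 \<le> max P q"
  shows "pmin P q \<le> 2 * max P q"
proof -
  obtain p where p: "prime p" "max P q < p" "p \<le> 2 * max P q"
    using bertrand[OF assms] by blast
  then have "pmin P q \<le> p"
    unfolding pmin_def by (intro Least_le) simp
  then show ?thesis
    using p(3) by simp
qed

lemma VT_diff:
  assumes "length y = length x"
  shows "VT k x - VT k y
    = (\<Sum>i\<in>diff_pos x y. (int (x ! (i - 1)) - int (y ! (i - 1))) * int i ^ k)"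
proof -
  have "VT k x - VT k y = (\<Sum>i=1..length x. (int (x ! (i - 1)) - int (y ! (i - 1))) * int i ^ k)"
    using assms by (simp add: VT_def sum_subtractf[symmetric] algebra_simps)
  also have "\<dots> = (\<Sum>i\<in>diff_pos x y. (int (x ! (i - 1)) - int (y ! (i - 1))) * int i ^ k)"
    by (rule sum.mono_neutral_right) (auto simp: diff_pos_def)
  finally show ?thesis .
qed

lemma diff_pos_nonempty:
  assumes "length y = length x" "x \<noteq> y"
  shows "diff_pos x y \<noteq> {}"
proof
  assume "diff_pos x y = {}"
  then have "Suc i \<notin> diff_pos x y" for i
    by simp
  then have "x ! i = y ! i" if "i < length x" for i
    using that by (simp add: diff_pos_def)
  then show False
    using assms by (simp add: nth_equalityI)
qed

lemma letter_diff_bounds: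
  assumes "x \<in> words q n" "y \<in> words q n" "i \<in> diff_pos x y"
  shows "0 < \<bar>int (x ! (i - 1)) - int (y ! (i - 1))\<bar>"
    and "\<bar>int (x ! (i - 1)) - int (y ! (i - 1))\<bar> < int q"
proof -
  have "i - 1 < n"
    using assms(1,3) by (auto simp: words_def diff_pos_def)
  then have "x ! (i - 1) < q" "y ! (i - 1) < q"
    using assms(1,2) by (simp_all add: words_def)
  then show "0 < \<bar>int (x ! (i - 1)) - int (y ! (i - 1))\<bar>"
    and "\<bar>int (x ! (i - 1)) - int (y ! (i - 1))\<bar> < int q"
    using assms(3) by (auto simp: diff_pos_def)
qed

lemma VT_diff_dvd_in_code:
  assumes "x \<in> code q d P n a" "y \<in> code q d P n a" "k \<le> d - 2"
  shows "int (modulus q d P k) dvd VT k x - VT k y"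
proof -
  have "VT k x mod int (modulus q d P k) = VT k y mod int (modulus q d P k)"
    using assms by (auto simp: code_def)
  then show ?thesis
    by (simp add: mod_eq_dvd_iff)
qed

lemma pmin_dvd_VT_diff_in_code:
  assumes "2 \<le> q" "x \<in> code q d P n a" "y \<in> code q d P n a" "hamming x y < d" "k \<le> d - 2"
  shows "int (pmin P q) dvd VT k x - VT k y"
proof (cases "k = 0")
  case True
  have words: "x \<in> words q n" "y \<in> words q n"
    using assms(2,3) by (simp_all add: code_def)
  then have "\<bar>VT 0 x - VT 0 y\<bar>
      \<le> (\<Sum>i\<in>diff_pos x y. \<bar>int (x ! (i - 1)) - int (y ! (i - 1))\<bar>)"
    by (simp add: VT_diff words_def)
  also have "\<dots> \<le> (\<Sum>i\<in>diff_pos x y. int q - 1)"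
  proof (rule sum_mono)
    fix i assume "i \<in> diff_pos x y"
    then show "\<bar>int (x ! (i - 1)) - int (y ! (i - 1))\<bar> \<le> int q - 1"
      using letter_diff_bounds(2)[OF words \<open>i \<in> diff_pos x y\<close>] by linarith
  qed
  also have "\<dots> \<le> int (d - 1) * (int q - 1)"
    using assms(1,4) by (simp add: hamming_def mult_right_mono)
  also have "\<dots> < int (modulus q d P 0)"
    using assms(1) by (simp add: modulus_def)
  finally have "\<bar>VT 0 x - VT 0 y\<bar> < int (modulus q d P 0)" .
  then have "VT 0 x - VT 0 y = 0"
    using VT_diff_dvd_in_code[OF assms(2,3), of 0] dvd_imp_le_int[of "VT 0 x - VT 0 y"]
    by fastforce
  then show ?thesis
    using True by simp
next
  case False
  then show ?thesis
    using VT_diff_dvd_in_code[OF assms(2,3,5)] by (simp add: modulus_def)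
qed

lemma code_distance:
  assumes "2 \<le> q" "x \<in> code q d P n a" "y \<in> code q d P n a" "x \<noteq> y"
    and "Max (diff_pos x y) - Min (diff_pos x y) < P"
  shows "d \<le> hamming x y"
proof (rule ccontr)
  assume "\<not> d \<le> hamming x y"
  define D where "D = diff_pos x y"
  define p where "p = int (pmin P q)"
  define e where "e i = int (x ! (i - 1)) - int (y ! (i - 1))" for i
  have words: "x \<in> words q n" "y \<in> words q n"
    using assms(2,3) by (simp_all add: code_def)
  have "finite D"
    by (simp add: D_def diff_pos_def)
  have "D \<noteq> {}"
    using words diff_pos_nonempty[of y x] assms(4) by (simp add: D_def words_def)
  then obtain s where "s \<in> D"
    by blast
  have "p dvd e s"
  proof (rule prime_dvd_weight_if_dvd_moments[where K = "d - 2" and x = int and D = D])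
    show "prime p"
      using prime_pmin by (simp add: p_def)
    show "card D \<le> d - 2 + 1"
      using \<open>\<not> d \<le> hamming x y\<close> by (simp add: D_def hamming_def)
    show "p dvd (\<Sum>i\<in>D. e i * int i ^ k)" if "k \<le> d - 2" for k
      using pmin_dvd_VT_diff_in_code[OF assms(1-3) _ that] \<open>\<not> d \<le> hamming x y\<close> words
      by (simp add: p_def D_def e_def VT_diff words_def)
    show "\<not> p dvd int s - int r" if "r \<in> D" "r \<noteq> s" for r
    proof
      assume "p dvd int s - int r"
      moreover have "int s - int r \<noteq> 0"
        using that(2) by simp
      ultimately have "p \<le> \<bar>int s - int r\<bar>"
        using dvd_imp_le_int[of "int s - int r" p] by (simp add: p_def)
      moreover have "Min D \<le> r" "r \<le> Max D" "Min D \<le> s" "s \<le> Max D"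
        using \<open>finite D\<close> \<open>s \<in> D\<close> that(1) by simp_all
      moreover have "int P \<le> p"
        using pmin_ge[of P q] by (simp add: p_def)
      ultimately show False
        using assms(5) by (simp add: D_def abs_le_iff)
    qed
  qed (use \<open>finite D\<close> \<open>s \<in> D\<close> in auto)
  moreover have "0 < \<bar>e s\<bar>" "\<bar>e s\<bar> < p"
    using letter_diff_bounds[OF words, of s] \<open>s \<in> D\<close> pmin_ge[of P q]
    by (auto simp: D_def e_def p_def)
  ultimately show False
    using dvd_imp_le_int[of "e s" p] by (simp add: p_def)
qed

lemma words_eq_lists: "words q n = {xs. set xs \<subseteq> {..<q} \<and> length xs = n}"
  unfolding words_def by (auto simp: in_set_conv_nth) (meson lessThan_iff nth_mem subsetD)

lemma card_words: "card (words q n) = q ^ n"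
  by (simp add: words_eq_lists card_lists_length_eq)

lemma finite_words: "finite (words q n)"
  by (simp add: words_eq_lists finite_lists_length_eq)

lemma modulus_pos: "0 < modulus q d P i"
  using prime_gt_0_nat[OF prime_pmin] by (simp add: modulus_def)

lemma words_subset_UN_code:
  "words q n \<subseteq> (\<Union>a\<in>(\<Pi>\<^sub>E i\<in>{0..d - 2}. {..<modulus q d P i}). code q d P n a)"
proof
  fix x assume x: "x \<in> words q n"
  define a where "a = (\<lambda>i\<in>{0..d - 2}. nat (VT i x mod int (modulus q d P i)))"
  have "a \<in> (\<Pi>\<^sub>E i\<in>{0..d - 2}. {..<modulus q d P i})"
    using modulus_pos by (auto simp: a_def nat_less_iff)
  moreover have "x \<in> code q d P n a"
    using x modulus_pos by (simp add: code_def a_def)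
  ultimately show "x \<in> (\<Union>a\<in>(\<Pi>\<^sub>E i\<in>{0..d - 2}. {..<modulus q d P i}). code q d P n a)"
    by blast
qed

lemma ex_card_UN_le_card_mult:
  assumes "finite A" "A \<noteq> {}" "\<And>a. a \<in> A \<Longrightarrow> finite (f a)"
  shows "\<exists>a\<in>A. card (\<Union>a\<in>A. f a) \<le> card A * card (f a)"
proof -
  define m where "m = Max (card ` f ` A)"
  have "m \<in> card ` f ` A"
    using assms(1,2) by (simp add: m_def)
  then obtain a where "a \<in> A" "card (f a) = m"
    by blast
  have "card (\<Union>a\<in>A. f a) \<le> (\<Sum>a\<in>A. card (f a))"
    using assms(1) by (rule card_UN_le)
  also have "\<dots> \<le> card A * m"
    using sum_bounded_above[of A "\<lambda>a. card (f a)" m] assms(1) by (simp add: m_def)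
  finally show ?thesis
    using \<open>a \<in> A\<close> \<open>card (f a) = m\<close> by blast
qed

lemma prod_modulus:
  assumes "2 \<le> d"
  shows "(\<Prod>i\<in>{0..d - 2}. modulus q d P i) = ((d - 1) * (q - 1) + 1) * pmin P q ^ (d - 2)"
proof -
  have "{0..d - 2} = insert 0 {1..d - 2}"
    by auto
  then show ?thesis
    by (simp add: modulus_def)
qed

lemma ex_code_card_ge:
  "\<exists>a. (\<forall>i\<in>{0..d - 2}. a i < modulus q d P i)
     \<and> q ^ n \<le> (\<Prod>i\<in>{0..d - 2}. modulus q d P i) * card (code q d P n a)"
proof -
  define A where "A = (\<Pi>\<^sub>E i\<in>{0..d - 2}. {..<modulus q d P i})"
  have "finite A" "card A = (\<Prod>i\<in>{0..d - 2}. modulus q d P i)"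
    by (simp_all add: A_def finite_PiE card_PiE)
  moreover have "(\<lambda>i\<in>{0..d - 2}. 0) \<in> A"
    using modulus_pos by (simp add: A_def)
  then have "A \<noteq> {}"
    by blast
  moreover have finite_code: "finite (code q d P n a)" for a
    using finite_words by (rule rev_finite_subset) (auto simp: code_def)
  ultimately obtain a where "a \<in> A" "card (\<Union>a\<in>A. code q d P n a) \<le> card A * card (code q d P n a)"
    using ex_card_UN_le_card_mult by metis
  moreover have "q ^ n \<le> card (\<Union>a\<in>A. code q d P n a)"
    unfolding card_words[symmetric] A_def
    using \<open>finite A\<close> finite_code words_subset_UN_code by (intro card_mono) (auto simp: A_def)
  ultimately show ?thesis
    using \<open>card A = (\<Prod>i\<in>{0..d - 2}. modulus q d P i)\<close> by (auto simp: A_def)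
qed

lemma redundancy_le_log:
  fixes q M :: nat
  assumes "1 < q" "0 < M" "q ^ n \<le> M * card C"
  shows "0 < card C" and "redundancy q n C \<le> log q M"
proof -
  have "0 < q ^ n"
    using assms(1) by simp
  then show "0 < card C"
    using assms(3) by (cases "card C") simp_all
  have "real n = log q (q ^ n)"
    using assms(1) by (simp add: log_nat_power)
  also have "\<dots> \<le> log q (M * card C)"
    using assms \<open>0 < card C\<close>
    by (subst log_le_cancel_iff) (auto simp flip: of_nat_power of_nat_mult)
  also have "\<dots> = log q M + log q (card C)"
    using assms(2) \<open>0 < card C\<close> by (simp add: log_mult)
  finally show "redundancy q n C \<le> log q M"
    by (simp add: redundancy_def)
qed

theorem theorem7:
  fixes q d P n :: nat
  assumes "q \<ge> 2" and "d \<ge> 2" and "P \<ge> 1" and "n \<ge> 1"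
  shows "(\<forall>a. (\<forall>i \<in> {0..d - 2}. a i < modulus q d P i) \<longrightarrow>
            (\<forall>x \<in> code q d P n a. \<forall>y \<in> code q d P n a. x \<noteq> y \<longrightarrow>
               Max (diff_pos x y) - Min (diff_pos x y) < P \<longrightarrow> hamming x y \<ge> d))
       \<and> (\<exists>a. (\<forall>i \<in> {0..d - 2}. a i < modulus q d P i) \<and>
            card (code q d P n a) > 0 \<and>
            redundancy q n (code q d P n a)
              \<le> real (d - 2) * log (real q) (2 * real (max P q))
                 + log (real q) (real ((d - 1) * (q - 1) + 1)))"
proof -
  define p where "p = pmin P q"
  define m0 where "m0 = (d - 1) * (q - 1) + 1"
  have "(\<Prod>i\<in>{0..d - 2}. modulus q d P i) = m0 * p ^ (d - 2)"
    using prod_modulus[OF assms(2)] by (simp add: m0_def p_def)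
  then obtain a where a: "\<forall>i\<in>{0..d - 2}. a i < modulus q d P i"
    and card: "q ^ n \<le> m0 * p ^ (d - 2) * card (code q d P n a)"
    using ex_code_card_ge[of d q P n] by auto
  have "0 < p" "p \<le> 2 * max P q" "0 < m0"
    using prime_gt_0_nat[OF prime_pmin] pmin_le_double assms(1) by (simp_all add: p_def m0_def)
  then have "0 < card (code q d P n a)"
    using redundancy_le_log(1)[OF _ _ card] assms(1) by simp
  have "redundancy q n (code q d P n a) \<le> log q (m0 * p ^ (d - 2))"
    using redundancy_le_log(2)[OF _ _ card] \<open>0 < p\<close> \<open>0 < m0\<close> assms(1) by simp
  also have "\<dots> = real (d - 2) * log q p + log q m0"
    using \<open>0 < p\<close> \<open>0 < m0\<close> assms(1) by (simp add: log_mult log_nat_power)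
  also have "\<dots> \<le> real (d - 2) * log q (2 * max P q) + log q m0"
    using \<open>0 < p\<close> \<open>p \<le> 2 * max P q\<close> assms(1)
    by (intro add_right_mono mult_left_mono) simp_all
  finally show ?thesis
    using code_distance[OF assms(1)] a \<open>0 < card (code q d P n a)\<close> by (auto simp: m0_def)
qed

end
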